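(* Let $\mathsf{N}_\mathsf{F}:=\mathsf{L}_\mathsf{F}\mathsf{K}_\mathsf{F}$ be a system of $N=L+K$ local fermionic modes, with the Jordan–Wigner isomorphism $J$ defined by an ordering in which the $L$ modes of $\mathsf{L}_\mathsf{F}$ come first. Let $\mathcal{C}$ be a fermionic transformation from $\mathsf{N}_\mathsf{F}$ to $\mathsf{N}_\mathsf{F}$ with a single Kraus operator $C$ such that $J(C)=U\otimes I_{\mathsf{K}_\mathsf{F}}$, where $U$ acts on the first $L$ qubits and $I_{\mathsf{K}_\mathsf{F}}$ is the identity on the last $K$ qubits. Then $\mathcal{C}$ is local on the first $L$ modes, i.e. $C$ is a linear combination of products of field operators of the modes of $\mathsf{L}_\mathsf{F}$ only.
   Context: A system of $N$ local fermionic modes is described by field operators $\varphi_1,\dots,\varphi_N$ with $\{\varphi_i,\varphi_j^\dagger\}=\delta_{ij}I$, $\{\varphi_i,\varphi_j\}=0$. Given an ordering of the modes, the Jordan–Wigner isomorphism identifies the Fock basis $(\varphi_1^\dagger)^{n_1}\cdots(\varphi_N^\dagger)^{n_N}|\Omega\rangle$ with the computational basis of $N$ qubits, with $J(\varphi_i)=(\bigotimes_{l<i}\sigma^z_l)\otimes\sigma^-_i\otimes(\bigotimes_{k>i}I_k)$, extended linearly and multiplicatively with $J(X^\dagger)=J(X)^\dagger$. Fermionic transformations are completely positive maps whose Kraus operators each are linear combinations of products of field operators with either all an even or all an odd number of factors. *)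

theory Defs
  imports "Jordan_Normal_Form.Schur_Decomposition"
begin

(* Kronecker (tensor) product of matrices, standard ordering:
   the first factor carries the most significant index. *)
definition kron :: "complex mat \<Rightarrow> complex mat \<Rightarrow> complex mat" where
  "kron A B = mat (dim_row A * dim_row B) (dim_col A * dim_col B)
     (\<lambda>(i,j). A $$ (i div dim_row B, j div dim_col B) * B $$ (i mod dim_row B, j mod dim_col B))"

definition sigma_z :: "complex mat" where
  "sigma_z = mat 2 2 (\<lambda>(i,j). if i = j then (if i = 0 then 1 else -1) else 0)"

definition sigma_minus :: "complex mat" where
  "sigma_minus = mat 2 2 (\<lambda>(i,j). if i = 0 \<and> j = 1 then 1 else 0)"

fun sz_pow :: "nat \<Rightarrow> complex mat" where
  "sz_pow 0 = 1\<^sub>m 1"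
| "sz_pow (Suc n) = kron (sz_pow n) sigma_z"

(* Jordan-Wigner image of the annihilation operator of mode i (0-indexed, i < N)
   in a system of N modes:  (sigma^z)^{\<otimes> i} \<otimes> sigma^- \<otimes> I^{\<otimes>(N-1-i)} *)
definition jw_ann :: "nat \<Rightarrow> nat \<Rightarrow> complex mat" where
  "jw_ann N i = kron (kron (sz_pow i) sigma_minus) (1\<^sub>m (2 ^ (N - 1 - i)))"

definition field_ops :: "nat \<Rightarrow> nat set \<Rightarrow> complex mat set" where
  "field_ops N S = {jw_ann N i | i. i \<in> S} \<union> {mat_adjoint (jw_ann N i) | i. i \<in> S}"

fun prod_word :: "nat \<Rightarrow> complex mat list \<Rightarrow> complex mat" where
  "prod_word d [] = 1\<^sub>m d"
| "prod_word d (x # xs) = x * prod_word d xs"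

definition field_products :: "nat \<Rightarrow> nat set \<Rightarrow> complex mat set" where
  "field_products N S = {prod_word (2 ^ N) ws | ws. set ws \<subseteq> field_ops N S}"

definition even_products :: "nat \<Rightarrow> complex mat set" where
  "even_products N = {prod_word (2 ^ N) ws | ws. set ws \<subseteq> field_ops N {..<N} \<and> even (length ws)}"

definition odd_products :: "nat \<Rightarrow> complex mat set" where
  "odd_products N = {prod_word (2 ^ N) ws | ws. set ws \<subseteq> field_ops N {..<N} \<and> odd (length ws)}"

inductive_set lin_span :: "nat \<Rightarrow> complex mat set \<Rightarrow> complex mat set" for d G where
  zero: "0\<^sub>m d d \<in> lin_span d G"
| gen: "g \<in> G \<Longrightarrow> g \<in> lin_span d G"
| add: "a \<in> lin_span d G \<Longrightarrow> b \<in> lin_span d G \<Longrightarrow> a + b \<in> lin_span d G"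
| smult: "a \<in> lin_span d G \<Longrightarrow> c \<cdot>\<^sub>m a \<in> lin_span d G"

end

theory Submission
  imports Defs
begin

(* Induction on L, for all K at once. Under J the field operators of mode L are
   sigma_z^(tensor L) (x) sigma^- (x) I_K and its adjoint. By induction (applied with K + 1 in place
   of K), A (x) I_2 (x) I_K is local on the first L modes for every A; multiplying it from the right
   by these operators, after replacing A by A sigma_z^(tensor L) so that the sigma_z string cancels,
   yields A (x) E (x) I_K for every 2x2 matrix unit E. Every operator on L + 1 qubits is a sum of
   four such terms A (x) E. *)

lemma sum_lessThan_mult_nat:
  fixes f :: "nat \<Rightarrow> 'a::comm_monoid_add"
  shows "(\<Sum>k<m * n. f k) = (\<Sum>p<m. \<Sum>q<n. f (p * n + q))"
proof -
  have "(\<Sum>k\<in>{p * n..<p * n + n}. f k) = (\<Sum>q<n. f (p * n + q))" for p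
    using sum.shift_bounds_nat_ivl[of f 0 "p * n" n] by (simp add: lessThan_atLeast0 add.commute)
  then show ?thesis by (simp add: sum.nat_group[symmetric])
qed

lemma div_less_of_less_mult: "i < m * (n::nat) \<Longrightarrow> i div n < m"
  by (simp add: less_mult_imp_div_less)

lemma mod_less_of_less_mult: "i < m * (n::nat) \<Longrightarrow> i mod n < n"
  by (cases n) auto

lemma dim_kron [simp]:
  "dim_row (kron A B) = dim_row A * dim_row B"
  "dim_col (kron A B) = dim_col A * dim_col B"
  by (simp_all add: kron_def)

lemma index_kron:
  assumes "i < dim_row A * dim_row B" "j < dim_col A * dim_col B"
  shows "kron A B $$ (i, j) =
    A $$ (i div dim_row B, j div dim_col B) * B $$ (i mod dim_row B, j mod dim_col B)"
  using assms by (simp add: kron_def)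

lemma kron_mult:
  assumes "dim_col A = dim_row C" "dim_col B = dim_row D"
  shows "kron A B * kron C D = kron (A * C) (B * D)"
proof (rule eq_matI)
  fix i j assume i: "i < dim_row (kron (A * C) (B * D))" and j: "j < dim_col (kron (A * C) (B * D))"
  let ?n = "dim_col B"
  have i1: "i div dim_row B < dim_row A" "i mod dim_row B < dim_row B"
    using i by (auto intro: div_less_of_less_mult mod_less_of_less_mult)
  have j1: "j div dim_col D < dim_col C" "j mod dim_col D < dim_col D"
    using j by (auto intro: div_less_of_less_mult mod_less_of_less_mult)
  have "(kron A B * kron C D) $$ (i, j) = (\<Sum>k<dim_col A * ?n.
     A $$ (i div dim_row B, k div ?n) * B $$ (i mod dim_row B, k mod ?n) *
     (C $$ (k div dim_row D, j div dim_col D) * D $$ (k mod dim_row D, j mod dim_col D)))"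
    using i j assms by (simp add: times_mat_def scalar_prod_def kron_def lessThan_atLeast0 mult.commute)
  also have "\<dots> = (\<Sum>p<dim_col A. \<Sum>q<?n.
     A $$ (i div dim_row B, p) * C $$ (p, j div dim_col D) *
     (B $$ (i mod dim_row B, q) * D $$ (q, j mod dim_col D)))"
    unfolding sum_lessThan_mult_nat using assms by (intro sum.cong refl) (simp add: mult_ac)
  also have "\<dots> = (A * C) $$ (i div dim_row B, j div dim_col D) * (B * D) $$ (i mod dim_row B, j mod dim_col D)"
    using i1 j1 assms by (simp add: times_mat_def scalar_prod_def sum_product lessThan_atLeast0 mult_ac)
  finally show "(kron A B * kron C D) $$ (i, j) = kron (A * C) (B * D) $$ (i, j)"
    using i j by (simp add: kron_def)
qed (simp_all add: kron_def)

lemma kron_carrier_mat: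
  "A \<in> carrier_mat m n \<Longrightarrow> B \<in> carrier_mat p q \<Longrightarrow> kron A B \<in> carrier_mat (m * p) (n * q)"
  unfolding carrier_mat_def by simp

lemma kron_assoc: "kron (kron A B) C = kron A (kron B C)"
proof (rule eq_matI)
  fix i j assume "i < dim_row (kron A (kron B C))" "j < dim_col (kron A (kron B C))"
  then have i: "i < dim_row A * dim_row B * dim_row C" and j: "j < dim_col A * dim_col B * dim_col C"
    by (simp_all add: mult.assoc)
  have mixed_radix: "k div (b * c) = k div c div b" "k mod (b * c) div c = k div c mod b"
    "k mod (b * c) mod c = k mod c" if "k < a * b * c" for a b c k :: nat
  proof -
    have "c > 0" using that by (cases c) auto
    then show "k div (b * c) = k div c div b" "k mod (b * c) div c = k div c mod b"
      "k mod (b * c) mod c = k mod c"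
      by (simp_all add: div_mult2_eq mod_mult2_eq mult.commute[of b c])
  qed
  show "kron (kron A B) C $$ (i, j) = kron A (kron B C) $$ (i, j)"
    using i j div_less_of_less_mult[OF i] div_less_of_less_mult[OF j]
      mod_less_of_less_mult[of i "dim_row A" "dim_row B * dim_row C"]
      mod_less_of_less_mult[of j "dim_col A" "dim_col B * dim_col C"]
    by (simp add: index_kron mixed_radix[OF i] mixed_radix[OF j] mult.assoc)
qed (simp_all add: mult.assoc)

lemma kron_add_left:
  assumes "A \<in> carrier_mat m n" "A' \<in> carrier_mat m n"
  shows "kron (A + A') B = kron A B + kron A' B"
proof (rule eq_matI)
  fix i j assume "i < dim_row (kron A B + kron A' B)" "j < dim_col (kron A B + kron A' B)"
  moreover from this have "i div dim_row B < m" "j div dim_col B < n"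
    using assms by (auto intro: div_less_of_less_mult)
  ultimately show "kron (A + A') B $$ (i, j) = (kron A B + kron A' B) $$ (i, j)"
    using assms by (simp add: kron_def distrib_right)
qed (use assms in auto)

lemma kron_one_mat: "kron (1\<^sub>m m) (1\<^sub>m n) = 1\<^sub>m (m * n)"
proof (rule eq_matI)
  fix i j assume i: "i < dim_row (1\<^sub>m (m * n))" and j: "j < dim_col (1\<^sub>m (m * n))"
  have "(i div n = j div n \<and> i mod n = j mod n) = (i = j)"
    by (metis div_mult_mod_eq)
  moreover have "i div n < m" "j div n < m"
    using i j by (auto intro: div_less_of_less_mult)
  moreover have "n > 0"
    using i by (cases n) auto
  ultimately show "kron (1\<^sub>m m) (1\<^sub>m n) $$ (i, j) = 1\<^sub>m (m * n) $$ (i, j)"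
    using i j by (auto simp: kron_def)
qed simp_all

lemma kron_scalar_left:
  assumes "A \<in> carrier_mat 1 1"
  shows "kron A B = A $$ (0, 0) \<cdot>\<^sub>m B"
  by (rule eq_matI) (use assms in \<open>simp_all add: kron_def\<close>)

lemma mat_adjoint_altdef: "mat_adjoint A = mat (dim_col A) (dim_row A) (\<lambda>(i, j). conjugate (A $$ (j, i)))"
  by (rule eq_matI) (auto simp: mat_adjoint_def mat_of_rows_def)

lemma mat_adjoint_carrier_mat: "A \<in> carrier_mat m n \<Longrightarrow> mat_adjoint A \<in> carrier_mat n m"
  unfolding mat_adjoint_altdef carrier_mat_def by simp

lemma mat_adjoint_one_mat [simp]: "mat_adjoint (1\<^sub>m n) = (1\<^sub>m n :: complex mat)"
  by (rule eq_matI) (auto simp: mat_adjoint_altdef)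

lemma mat_adjoint_kron: "mat_adjoint (kron A B) = kron (mat_adjoint A) (mat_adjoint B)"
proof (rule eq_matI)
  fix i j
  assume "i < dim_row (kron (mat_adjoint A) (mat_adjoint B))" "j < dim_col (kron (mat_adjoint A) (mat_adjoint B))"
  then have i: "i < dim_col A * dim_col B" and j: "j < dim_row A * dim_row B"
    by (simp_all add: mat_adjoint_altdef)
  then show "mat_adjoint (kron A B) $$ (i, j) = kron (mat_adjoint A) (mat_adjoint B) $$ (i, j)"
    using div_less_of_less_mult[OF i] div_less_of_less_mult[OF j]
      mod_less_of_less_mult[OF i] mod_less_of_less_mult[OF j]
    by (simp add: mat_adjoint_altdef kron_def)
qed (simp_all add: mat_adjoint_altdef)

definition mat_unit2 :: "nat \<Rightarrow> nat \<Rightarrow> complex mat" where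
  "mat_unit2 a b = mat 2 2 (\<lambda>(i, j). if i = a \<and> j = b then 1 else 0)"

lemma mat_unit2_carrier_mat [simp]: "mat_unit2 a b \<in> carrier_mat 2 2"
  by (simp add: mat_unit2_def)

lemma less_2_cases: "(i::nat) < 2 \<longleftrightarrow> i = 0 \<or> i = 1"
  by auto

lemma sum_lessThan_2: "(\<Sum>k<2. f k) = f 0 + f (Suc 0)"
  by (simp add: numeral_2_eq_2)

lemma mat_unit2_mult: "b < 2 \<Longrightarrow> mat_unit2 a b * mat_unit2 b c = mat_unit2 a c"
  by (rule eq_matI)
    (auto simp: mat_unit2_def times_mat_def scalar_prod_def lessThan_atLeast0[symmetric] sum_lessThan_2 less_2_cases)

lemma sigma_minus_eq_mat_unit2: "sigma_minus = mat_unit2 0 1"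
  by (rule eq_matI) (auto simp: sigma_minus_def mat_unit2_def)

lemma mat_adjoint_mat_unit2: "mat_adjoint (mat_unit2 a b) = mat_unit2 b a"
  by (rule eq_matI) (auto simp: mat_unit2_def mat_adjoint_altdef)

lemma sigma_z_carrier_mat [simp]: "sigma_z \<in> carrier_mat 2 2"
  by (simp add: sigma_z_def)

lemma sigma_z_mult_sigma_z: "sigma_z * sigma_z = 1\<^sub>m 2"
  by (rule eq_matI)
    (auto simp: sigma_z_def times_mat_def scalar_prod_def lessThan_atLeast0[symmetric] sum_lessThan_2 less_2_cases)

lemma mat_adjoint_sigma_z: "mat_adjoint sigma_z = sigma_z"
  by (rule eq_matI) (auto simp: sigma_z_def mat_adjoint_altdef less_2_cases)

lemma sz_pow_carrier_mat [simp]: "sz_pow n \<in> carrier_mat (2 ^ n) (2 ^ n)"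
  by (induction n) (auto simp: sigma_z_def)

lemma sz_pow_mult_sz_pow: "sz_pow n * sz_pow n = 1\<^sub>m (2 ^ n)"
proof (induction n)
  case (Suc n)
  have "sz_pow (Suc n) * sz_pow (Suc n) = kron (sz_pow n * sz_pow n) (sigma_z * sigma_z)"
    by (simp add: kron_mult carrier_matD[OF sz_pow_carrier_mat] carrier_matD[OF sigma_z_carrier_mat])
  then show ?case
    by (simp add: Suc sigma_z_mult_sigma_z kron_one_mat mult.commute)
qed simp

lemma mat_adjoint_sz_pow: "mat_adjoint (sz_pow n) = sz_pow n"
  by (induction n) (simp_all add: mat_adjoint_kron mat_adjoint_sigma_z)

lemma lin_span_carrier_mat:
  assumes "G \<subseteq> carrier_mat d d" "x \<in> lin_span d G"
  shows "x \<in> carrier_mat d d"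
  using assms(2) by induction (use assms(1) in auto)

lemma lin_span_mono:
  assumes "G \<subseteq> G'" "x \<in> lin_span d G"
  shows "x \<in> lin_span d G'"
  using assms(2) by induction (use assms(1) in \<open>auto intro: lin_span.intros\<close>)

lemma lin_span_mult_right:
  assumes G: "G \<subseteq> carrier_mat d d" and g: "g \<in> carrier_mat d d"
    and closed: "\<And>h. h \<in> G \<Longrightarrow> h * g \<in> G"
    and x: "x \<in> lin_span d G"
  shows "x * g \<in> lin_span d G"
  using x
proof induction
  case zero
  then show ?case using g by (simp add: lin_span.zero)
next
  case (gen h)
  then show ?case by (simp add: closed lin_span.gen)
next
  case (add a b)
  then have "(a + b) * g = a * g + b * g"
    using add_mult_distrib_mat[OF _ _ g] lin_span_carrier_mat[OF G] by blast
  then show ?case using add.IH by (simp add: lin_span.add)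
next
  case (smult a c)
  then have "(c \<cdot>\<^sub>m a) * g = c \<cdot>\<^sub>m (a * g)"
    using mult_smult_assoc_mat[OF _ g] lin_span_carrier_mat[OF G] by blast
  then show ?case using smult.IH by (simp add: lin_span.smult)
qed

lemma jw_ann_carrier_mat:
  assumes "i < N"
  shows "jw_ann N i \<in> carrier_mat (2 ^ N) (2 ^ N)"
proof -
  have "N = i + 1 + (N - 1 - i)"
    using assms by simp
  then have "(2::nat) ^ i * 2 * 2 ^ (N - 1 - i) = 2 ^ N"
    by (metis power_add power_one_right)
  moreover have "dim_row (jw_ann N i) = 2 ^ i * 2 * 2 ^ (N - 1 - i)"
    "dim_col (jw_ann N i) = 2 ^ i * 2 * 2 ^ (N - 1 - i)"
    by (simp_all add: jw_ann_def sigma_minus_def carrier_matD[OF sz_pow_carrier_mat])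
  ultimately show ?thesis
    by (intro carrier_matI) simp_all
qed

lemma field_ops_carrier_mat:
  assumes "S \<subseteq> {..<N}"
  shows "field_ops N S \<subseteq> carrier_mat (2 ^ N) (2 ^ N)"
proof
  fix x assume "x \<in> field_ops N S"
  then obtain i where "i < N" "x = jw_ann N i \<or> x = mat_adjoint (jw_ann N i)"
    using assms unfolding field_ops_def by blast
  then show "x \<in> carrier_mat (2 ^ N) (2 ^ N)"
    using jw_ann_carrier_mat mat_adjoint_carrier_mat by blast
qed

lemma field_ops_mono: "S \<subseteq> T \<Longrightarrow> field_ops N S \<subseteq> field_ops N T"
  unfolding field_ops_def by blast

lemma prod_word_carrier_mat: "set ws \<subseteq> carrier_mat d d \<Longrightarrow> prod_word d ws \<in> carrier_mat d d"
  by (induction ws) auto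

lemma prod_word_snoc:
  "set ws \<subseteq> carrier_mat d d \<Longrightarrow> g \<in> carrier_mat d d \<Longrightarrow> prod_word d (ws @ [g]) = prod_word d ws * g"
proof (induction ws)
  case (Cons w ws)
  then show ?case
    using assoc_mult_mat[of w d d "prod_word d ws" d g d] by (simp add: prod_word_carrier_mat)
qed simp

lemma one_mat_in_field_products: "1\<^sub>m (2 ^ N) \<in> field_products N S"
  unfolding field_products_def by (auto intro: exI[of _ "[]"])

lemma field_products_mono: "S \<subseteq> T \<Longrightarrow> field_products N S \<subseteq> field_products N T"
  unfolding field_products_def using field_ops_mono by blast

lemma field_products_carrier_mat:
  assumes S: "S \<subseteq> {..<N}"
  shows "field_products N S \<subseteq> carrier_mat (2 ^ N) (2 ^ N)"
proof
  fix x assume "x \<in> field_products N S"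
  then obtain ws where "x = prod_word (2 ^ N) ws" "set ws \<subseteq> field_ops N S"
    unfolding field_products_def by blast
  with field_ops_carrier_mat[OF S] show "x \<in> carrier_mat (2 ^ N) (2 ^ N)"
    using prod_word_carrier_mat[of ws] by blast
qed

lemma field_products_mult_field_op:
  assumes S: "S \<subseteq> {..<N}" and h: "h \<in> field_products N S" and g: "g \<in> field_ops N S"
  shows "h * g \<in> field_products N S"
proof -
  obtain ws where ws: "h = prod_word (2 ^ N) ws" "set ws \<subseteq> field_ops N S"
    using h unfolding field_products_def by blast
  have "set ws \<subseteq> carrier_mat (2 ^ N) (2 ^ N)" "g \<in> carrier_mat (2 ^ N) (2 ^ N)"
    using ws(2) g field_ops_carrier_mat[OF S] by blast+
  then have "h * g = prod_word (2 ^ N) (ws @ [g])"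
    by (simp add: ws(1) prod_word_snoc)
  moreover have "set (ws @ [g]) \<subseteq> field_ops N S"
    using ws(2) g by simp
  ultimately show ?thesis
    unfolding field_products_def by blast
qed

lemma lin_span_field_products_mult_field_op:
  assumes S: "S \<subseteq> {..<N}" and g: "g \<in> field_ops N S"
    and x: "x \<in> lin_span (2 ^ N) (field_products N S)"
  shows "x * g \<in> lin_span (2 ^ N) (field_products N S)"
proof (rule lin_span_mult_right[OF field_products_carrier_mat[OF S] _ _ x])
  show "g \<in> carrier_mat (2 ^ N) (2 ^ N)"
    using g field_ops_carrier_mat[OF S] by blast
qed (rule field_products_mult_field_op[OF S _ g])

definition last_qubit_block :: "complex mat \<Rightarrow> nat \<Rightarrow> nat \<Rightarrow> complex mat" where
  "last_qubit_block U a b = mat (dim_row U div 2) (dim_col U div 2) (\<lambda>(i, j). U $$ (2 * i + a, 2 * j + b))"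

lemma last_qubit_block_carrier_mat:
  "U \<in> carrier_mat (n * 2) (n * 2) \<Longrightarrow> last_qubit_block U a b \<in> carrier_mat n n"
  by (simp add: last_qubit_block_def)

lemma index_kron_last_qubit_block:
  assumes U: "U \<in> carrier_mat (n * 2) (n * 2)"
    and i: "i < n * 2" and j: "j < n * 2" and "a < 2" "b < 2"
  shows "kron (last_qubit_block U a b) (mat_unit2 a b) $$ (i, j) =
    (if i mod 2 = a \<and> j mod 2 = b then U $$ (i, j) else 0)"
proof -
  have "i div 2 < n" "j div 2 < n"
    using i j by (auto intro: div_less_of_less_mult)
  moreover have "2 * (i div 2) + i mod 2 = i" "2 * (j div 2) + j mod 2 = j"
    by simp_all
  ultimately show ?thesis
    using U i j assms(4,5) by (auto simp: index_kron last_qubit_block_def mat_unit2_def)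
qed

lemma last_qubit_decomposition:
  assumes U: "U \<in> carrier_mat (n * 2) (n * 2)"
  shows "U = kron (last_qubit_block U 0 0) (mat_unit2 0 0) + kron (last_qubit_block U 0 1) (mat_unit2 0 1)
    + kron (last_qubit_block U 1 0) (mat_unit2 1 0) + kron (last_qubit_block U 1 1) (mat_unit2 1 1)"
    (is "U = ?D")
proof (rule eq_matI)
  fix i j assume "i < dim_row ?D" "j < dim_col ?D"
  then have "i < n * 2" "j < n * 2"
    using U by (simp_all add: last_qubit_block_def carrier_matD[OF mat_unit2_carrier_mat])
  moreover have "i mod 2 = 0 \<or> i mod 2 = 1" "j mod 2 = 0 \<or> j mod 2 = 1"
    by auto
  ultimately show "U $$ (i, j) = ?D $$ (i, j)"
    using U by (auto simp: index_kron_last_qubit_block carrier_matD[OF mat_unit2_carrier_mat]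
      carrier_matD[OF last_qubit_block_carrier_mat[OF U]])
qed (use U in \<open>simp_all add: last_qubit_block_def carrier_matD[OF mat_unit2_carrier_mat]\<close>)

lemma kron_sz_pow_in_field_ops:
  assumes "L \<in> S" and Y: "Y \<in> {sigma_minus, mat_adjoint sigma_minus}"
  shows "kron (kron (sz_pow L) Y) (1\<^sub>m (2 ^ K)) \<in> field_ops (Suc (L + K)) S"
proof -
  let ?N = "Suc (L + K)"
  have jw_ann_L: "jw_ann ?N L = kron (kron (sz_pow L) sigma_minus) (1\<^sub>m (2 ^ K))"
    by (simp add: jw_ann_def)
  have "jw_ann ?N L \<in> field_ops ?N S" "mat_adjoint (jw_ann ?N L) \<in> field_ops ?N S"
    using \<open>L \<in> S\<close> unfolding field_ops_def by blast+
  moreover have "mat_adjoint (jw_ann ?N L) = kron (kron (sz_pow L) (mat_adjoint sigma_minus)) (1\<^sub>m (2 ^ K))"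
    by (simp add: jw_ann_L mat_adjoint_kron mat_adjoint_sz_pow)
  ultimately show ?thesis
    using jw_ann_L Y by auto
qed

text \<open>The sigma_z string of the Jordan-Wigner operator of mode L is absorbed into the first factor:
  apply the hypothesis to B times the string, which squares to the identity.\<close>

lemma kron_mult_sigma_minus_in_lin_span_field_products:
  assumes S: "L \<in> S" "S \<subseteq> {..<Suc (L + K)}"
    and span: "\<And>B. B \<in> carrier_mat (2 ^ L) (2 ^ L) \<Longrightarrow>
      kron (kron B X) (1\<^sub>m (2 ^ K)) \<in> lin_span (2 ^ Suc (L + K)) (field_products (Suc (L + K)) S)"
    and X: "X \<in> carrier_mat 2 2" and Y: "Y \<in> {sigma_minus, mat_adjoint sigma_minus}"
    and B: "B \<in> carrier_mat (2 ^ L) (2 ^ L)"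
  shows "kron (kron B (X * Y)) (1\<^sub>m (2 ^ K)) \<in> lin_span (2 ^ Suc (L + K)) (field_products (Suc (L + K)) S)"
proof -
  let ?I = "1\<^sub>m (2 ^ K) :: complex mat"
  let ?Z = "sz_pow L"
  have Yc: "Y \<in> carrier_mat 2 2"
    using Y mat_adjoint_carrier_mat[of sigma_minus 2 2] by (auto simp: sigma_minus_def)
  have BZ: "B * ?Z \<in> carrier_mat (2 ^ L) (2 ^ L)"
    using B by simp
  have "kron (B * ?Z) X * kron ?Z Y = kron (B * ?Z * ?Z) (X * Y)"
    using BZ X Yc by (intro kron_mult) (simp_all add: carrier_matD[OF sz_pow_carrier_mat])
  also have "B * ?Z * ?Z = B"
    using B by (simp add: assoc_mult_mat[OF B sz_pow_carrier_mat sz_pow_carrier_mat] sz_pow_mult_sz_pow)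
  finally have "kron (kron (B * ?Z) X) ?I * kron (kron ?Z Y) ?I = kron (kron B (X * Y)) ?I"
    using BZ X Yc by (subst kron_mult) (simp_all add: carrier_matD[OF sz_pow_carrier_mat])
  then show ?thesis
    using lin_span_field_products_mult_field_op[OF S(2) kron_sz_pow_in_field_ops[OF S(1) Y] span[OF BZ]]
    by simp
qed

lemma kron_mat_unit2_in_lin_span_field_products:
  assumes IH: "\<And>A. A \<in> carrier_mat (2 ^ L) (2 ^ L) \<Longrightarrow>
      kron A (1\<^sub>m (2 ^ Suc K)) \<in> lin_span (2 ^ Suc (L + K)) (field_products (Suc (L + K)) {..<L})"
    and A: "A \<in> carrier_mat (2 ^ L) (2 ^ L)" and ab: "a < 2" "b < 2"
  shows "kron (kron A (mat_unit2 a b)) (1\<^sub>m (2 ^ K))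
    \<in> lin_span (2 ^ Suc (L + K)) (field_products (Suc (L + K)) {..<Suc L})"
proof -
  let ?Sp = "lin_span (2 ^ Suc (L + K)) (field_products (Suc (L + K)) {..<Suc L})"
  let ?I = "1\<^sub>m (2 ^ K) :: complex mat"
  have S: "L \<in> {..<Suc L}" "{..<Suc L} \<subseteq> {..<Suc (L + K)}"
    by auto
  note mult = kron_mult_sigma_minus_in_lin_span_field_products[OF S]
  note unit_simps = sigma_minus_eq_mat_unit2 mat_adjoint_mat_unit2 mat_unit2_mult
    left_mult_one_mat[OF mat_unit2_carrier_mat]
  have one: "kron (kron B (1\<^sub>m 2)) ?I \<in> ?Sp" if "B \<in> carrier_mat (2 ^ L) (2 ^ L)" for B
  proof -
    have "{..<L} \<subseteq> {..<Suc L}"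
      by auto
    from lin_span_mono[OF field_products_mono[OF this] IH[OF that]]
    have "kron B (1\<^sub>m (2 ^ Suc K)) \<in> ?Sp" .
    then show ?thesis
      by (simp add: kron_assoc kron_one_mat)
  qed
  have E01: "kron (kron B (mat_unit2 0 1)) ?I \<in> ?Sp"
    and E10: "kron (kron B (mat_unit2 1 0)) ?I \<in> ?Sp" if "B \<in> carrier_mat (2 ^ L) (2 ^ L)" for B
    using mult[OF one one_carrier_mat, of sigma_minus B] mult[OF one one_carrier_mat, of "mat_adjoint sigma_minus" B] that
    by (simp_all add: unit_simps)
  have E00: "kron (kron A (mat_unit2 0 0)) ?I \<in> ?Sp" and E11: "kron (kron A (mat_unit2 1 1)) ?I \<in> ?Sp"
    using mult[OF E01 mat_unit2_carrier_mat, of "mat_adjoint sigma_minus" A]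
      mult[OF E10 mat_unit2_carrier_mat, of sigma_minus A] A
    by (simp_all add: unit_simps)
  show ?thesis
    using ab E00 E01[OF A] E10[OF A] E11 by (auto simp: less_2_cases)
qed

lemma kron_one_mat_in_lin_span_field_products:
  "U \<in> carrier_mat (2 ^ L) (2 ^ L) \<Longrightarrow>
    kron U (1\<^sub>m (2 ^ K)) \<in> lin_span (2 ^ (L + K)) (field_products (L + K) {..<L})"
proof (induction L arbitrary: K U)
  case 0
  then have "kron U (1\<^sub>m (2 ^ K)) = U $$ (0, 0) \<cdot>\<^sub>m 1\<^sub>m (2 ^ (0 + K))"
    by (simp add: kron_scalar_left)
  then show ?case
    by (simp add: lin_span.gen lin_span.smult one_mat_in_field_products)
next
  case (Suc L)
  let ?T = "\<lambda>a b. kron (last_qubit_block U a b) (mat_unit2 a b)"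
  let ?I = "1\<^sub>m (2 ^ K) :: complex mat"
  have U: "U \<in> carrier_mat (2 ^ L * 2) (2 ^ L * 2)"
    using Suc.prems by (simp add: mult.commute)
  have T: "?T a b \<in> carrier_mat (2 ^ L * 2) (2 ^ L * 2)" for a b
    using kron_carrier_mat[OF last_qubit_block_carrier_mat[OF U] mat_unit2_carrier_mat] .
  have IH: "\<And>A. A \<in> carrier_mat (2 ^ L) (2 ^ L) \<Longrightarrow>
      kron A (1\<^sub>m (2 ^ Suc K)) \<in> lin_span (2 ^ Suc (L + K)) (field_products (Suc (L + K)) {..<L})"
    using Suc.IH[of _ "Suc K"] by simp
  have blocks: "kron (?T a b) ?I \<in> lin_span (2 ^ (Suc L + K)) (field_products (Suc L + K) {..<Suc L})"
    if "a < 2" "b < 2" for a b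
    using kron_mat_unit2_in_lin_span_field_products[OF IH last_qubit_block_carrier_mat[OF U] that]
    by simp
  have "kron U ?I = kron (?T 0 0 + ?T 0 1 + ?T 1 0 + ?T 1 1) ?I"
    using last_qubit_decomposition[OF U] by (rule arg_cong)
  also have "\<dots> = kron (?T 0 0) ?I + kron (?T 0 1) ?I + kron (?T 1 0) ?I + kron (?T 1 1) ?I"
    using T by (simp add: kron_add_left[of _ "2 ^ L * 2" "2 ^ L * 2"])
  finally show ?case
    using blocks by (simp add: lin_span.add)
qed

theorem lemma3:
  fixes L K :: nat and U C :: "complex mat"
  assumes U: "U \<in> carrier_mat (2 ^ L) (2 ^ L)"
    and parity: "C \<in> lin_span (2 ^ (L + K)) (even_products (L + K))
               \<or> C \<in> lin_span (2 ^ (L + K)) (odd_products (L + K))"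
    and JC: "C = kron U (1\<^sub>m (2 ^ K))"
  shows "C \<in> lin_span (2 ^ (L + K)) (field_products (L + K) {..<L})"
  unfolding JC using U by (rule kron_one_mat_in_lin_span_field_products)

end
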